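(* Suppose $u=u_1\ldots u_n$ and $v=v_1\ldots v_n$ in $\mathbb{P}^*$ are rearrangements of each other and both have increasing/decreasing factorizations. For $1\le i\le n-1$ let $s_i(u)=u_{i+1}\ldots u_n$ and $s_i(v)=v_{i+1}\ldots v_n$. Then for all $1\le i\le n-1$, $$d_i(u)+\Sigma(s_i(u))=d_i(v)+\Sigma(s_i(v)).$$
   Context: $\mathbb{P}^*$ is the set of finite words over the positive integers; $\Sigma(w)$ is the sum of the letters of $w$. A word $u=u_1\ldots u_n$ has an increasing/decreasing factorization if $u_1\le\cdots\le u_n$ or there is $k<n$ with $u_1\le\cdots\le u_k>u_{k+1}\ge\cdots\ge u_n$. For $1\le i\le n-1$, $D^{(i)}(u)=\{n-i+j:1\le j\le i,\ u_j>u_{n-i+j}\}$ and $d_i(u)=\sum_{n-i+j\in D^{(i)}(u)}(u_j-u_{n-i+j})$. A rearrangement of $u$ is a word obtained by permuting its letters. *)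

theory Defs
  imports Main "HOL-Library.Multiset"
begin

text \<open>Words over the positive integers are lists of naturals with all letters positive.
  Letters are indexed from 1 as in the paper: letter w j = w ! (j - 1).\<close>

definition pos_word :: "nat list \<Rightarrow> bool" where
  "pos_word w \<longleftrightarrow> (\<forall>x\<in>set w. 0 < x)"

definition letter :: "nat list \<Rightarrow> nat \<Rightarrow> nat" where
  "letter w j = w ! (j - 1)"

definition wsum :: "nat list \<Rightarrow> nat" where
  "wsum w = sum_list w"

definition inc_dec_fact :: "nat list \<Rightarrow> bool" where
  "inc_dec_fact u \<longleftrightarrow>
     (let n = length u in
       (\<forall>j. 1 \<le> j \<and> j < n \<longrightarrow> letter u j \<le> letter u (j+1)) \<or>
       (\<exists>k. 1 \<le> k \<and> k < n \<and>
          (\<forall>j. 1 \<le> j \<and> j < k \<longrightarrow> letter u j \<le> letter u (j+1)) \<and>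
          letter u k > letter u (k+1) \<and>
          (\<forall>j. k+1 \<le> j \<and> j < n \<longrightarrow> letter u j \<ge> letter u (j+1))))"

definition Dset :: "nat \<Rightarrow> nat list \<Rightarrow> nat set" where
  "Dset i u = {length u - i + j | j. 1 \<le> j \<and> j \<le> i \<and> letter u j > letter u (length u - i + j)}"

definition dval :: "nat \<Rightarrow> nat list \<Rightarrow> int" where
  "dval i u = (\<Sum>p\<in>Dset i u. int (letter u (p - (length u - i))) - int (letter u p))"

definition suffix_s :: "nat \<Rightarrow> nat list \<Rightarrow> nat list" where
  "suffix_s i w = drop i w"

end

theory Submission
  imports Defs
begin

text \<open>
  Write \<open>n = length u\<close>.  For \<open>j \<le> i\<close> the letter \<open>u\<^sub>j\<close> is compared with
  \<open>u\<^sub>n\<^sub>-\<^sub>i\<^sub>+\<^sub>j\<close>, and \<open>d\<^sub>i(u)\<close> collects the positive differences, so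
  \<open>d\<^sub>i(u) + \<Sigma>(s\<^sub>i(u)) = \<Sum>\<^sub>j max(u\<^sub>j, u\<^sub>n\<^sub>-\<^sub>i\<^sub>+\<^sub>j) + \<Sigma>(u\<^sub>i\<^sub>+\<^sub>1 \<dots> u\<^sub>n) - \<Sigma>(u\<^sub>n\<^sub>-\<^sub>i\<^sub>+\<^sub>1 \<dots> u\<^sub>n)\<close>;
  this quantity is called \<open>overlap_value i u\<close> below.
  A word with an increasing/decreasing factorization is unimodal (increasing, then
  decreasing), so a smallest letter sits at one of its two ends.  Removing that letter
  lowers both \<open>i\<close> and \<open>n\<close> by one and leaves \<open>overlap_value\<close> unchanged, and the word stays
  unimodal.  By induction on \<open>i\<close>, \<open>overlap_value i u\<close> therefore equals the sum of the
  \<open>n - i\<close> largest letters of \<open>u\<close>, i.e. \<open>\<Sigma>(drop i (sort u))\<close>.  This depends only on the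
  multiset of letters, which gives the theorem.
\<close>

definition unimodal :: "'a::linorder list \<Rightarrow> bool" where
  "unimodal u \<longleftrightarrow> (\<exists>a b. u = a @ b \<and> sorted a \<and> sorted (rev b))"

text \<open>An increasing/decreasing factorization in the sense of the paper is a unimodal
  word; the split is taken right after the peak \<open>u\<^sub>k\<close> (or at the end).\<close>

lemma inc_dec_fact_unimodal:
  assumes "inc_dec_fact u"
  shows "unimodal u"
proof -
  have split_unimodal: "unimodal u"
    if inc: "\<forall>j. 1 \<le> j \<and> j < k \<longrightarrow> letter u j \<le> letter u (j+1)"
      and dec: "\<forall>j. k+1 \<le> j \<and> j < length u \<longrightarrow> letter u j \<ge> letter u (j+1)"
    for k
  proof -
    have "sorted (take k u)"
      unfolding sorted_iff_nth_Suc
    proof (intro allI impI)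
      fix j assume "Suc j < length (take k u)"
      then show "take k u ! j \<le> take k u ! Suc j"
        using inc[rule_format, of "Suc j"] by (simp add: letter_def)
    qed
    moreover have "sorted (rev (drop k u))"
      unfolding sorted_rev_iff_nth_Suc
    proof (intro allI impI)
      fix j assume "Suc j < length (drop k u)"
      then show "drop k u ! Suc j \<le> drop k u ! j"
        using dec[rule_format, of "k + Suc j"] by (simp add: letter_def)
    qed
    ultimately show ?thesis
      unfolding unimodal_def by (intro exI[of _ "take k u"] exI[of _ "drop k u"]) simp
  qed
  from assms show ?thesis
    unfolding inc_dec_fact_def Let_def
  proof (elim disjE exE conjE)
    assume "\<forall>j. 1 \<le> j \<and> j < length u \<longrightarrow> letter u j \<le> letter u (j+1)"
    then show ?thesis by (intro split_unimodal[of "length u"]) auto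
  qed (rule split_unimodal)
qed

lemma unimodal_Cons: "unimodal (x # w) \<Longrightarrow> unimodal w"
proof -
  assume "unimodal (x # w)"
  then obtain a b where ab: "x # w = a @ b" "sorted a" "sorted (rev b)"
    unfolding unimodal_def by blast
  show "unimodal w"
  proof (cases a)
    case Nil
    then have "b = x # w" using ab(1) by simp
    then have "sorted (rev w @ [x])" using ab(3) by simp
    then have "sorted (rev w)" using sorted_append by blast
    then show ?thesis unfolding unimodal_def by (intro exI[of _ "[]"] exI[of _ w]) simp
  next
    case (Cons y a')
    then have "w = a' @ b" "sorted a'" using ab by auto
    then show ?thesis using ab(3) unfolding unimodal_def by blast
  qed
qed

lemma unimodal_snoc: "unimodal (w @ [x]) \<Longrightarrow> unimodal w"
proof -
  assume "unimodal (w @ [x])"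
  then obtain a b where ab: "w @ [x] = a @ b" "sorted a" "sorted (rev b)"
    unfolding unimodal_def by blast
  show "unimodal w"
  proof (cases b rule: rev_cases)
    case Nil
    then have "a = w @ [x]" using ab(1) by simp
    then have "sorted (w @ [x])" using ab(2) by simp
    then have "sorted w" using sorted_append by blast
    then show ?thesis unfolding unimodal_def by (intro exI[of _ w] exI[of _ "[]"]) simp
  next
    case (snoc b' y)
    then have "w = a @ b'" "sorted (rev b')" using ab by (auto simp: sorted_append)
    then show ?thesis using ab(2) unfolding unimodal_def by blast
  qed
qed

text \<open>A nonempty unimodal word has a minimal letter at one of its ends: the first letter
  is the minimum of the increasing part, the last letter that of the decreasing part.\<close>

lemma unimodal_min_at_end:
  assumes "unimodal u" "u \<noteq> []"
  obtains x w where "u = x # w \<or> u = w @ [x]" "\<forall>y\<in>set w. x \<le> y"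
proof -
  obtain a b where u: "u = a @ b" and sa: "sorted a" and sb: "sorted (rev b)"
    using assms(1) unfolding unimodal_def by blast
  consider (no_dec) "b = []" | (no_inc) "a = []"
    | (both) x a' b' z where "a = x # a'" "b = b' @ [z]"
    by (metis neq_Nil_conv rev_exhaust)
  then show ?thesis
  proof cases
    case no_dec
    then obtain x w where "u = x # w" using assms(2) u by (cases a) auto
    then show ?thesis using that sa u no_dec by auto
  next
    case no_inc
    then obtain w x where "u = w @ [x]" using assms(2) u by (metis append_Nil rev_exhaust)
    then show ?thesis using that sb u no_inc by (auto simp: sorted_append)
  next
    case both
    have ends_min: "\<forall>y\<in>set a. x \<le> y" "\<forall>y\<in>set b. z \<le> y"
      using sa sb both by (auto simp: sorted_append)
    show ?thesis
    proof (cases "x \<le> z")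
      case True
      then have "\<forall>y\<in>set (a' @ b). x \<le> y" using ends_min both by (auto intro: order_trans)
      then show ?thesis using that[of x "a' @ b"] both u by simp
    next
      case False
      then have "\<forall>y\<in>set (a @ b'). z \<le> y" using ends_min both by auto
      then show ?thesis using that[of z "a @ b'"] both u by simp
    qed
  qed
qed

definition overlap_value :: "nat \<Rightarrow> nat list \<Rightarrow> int" where
  "overlap_value i u =
     (\<Sum>(a, b)\<leftarrow>zip (take i u) (drop (length u - i) u). int (max a b))
     + int (sum_list (drop i u)) - int (sum_list (drop (length u - i) u))"

text \<open>Since \<open>max a b - b\<close> is the positive part of \<open>a - b\<close>, the left-hand side of the
  theorem is exactly the overlap value.\<close>

lemma dval_plus_suffix_sum:
  assumes "i \<le> length u"
  shows "dval i u + int (sum_list (drop i u)) = overlap_value i u"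
proof -
  define n where "n = length u"
  define A where "A = {j. 1 \<le> j \<and> j \<le> i \<and> letter u j > letter u (n - i + j)}"
  have "Dset i u = (\<lambda>j. n - i + j) ` A" unfolding Dset_def A_def n_def by auto
  moreover have "inj_on (\<lambda>j. n - i + j) A" by (auto simp: inj_on_def)
  ultimately have "dval i u = (\<Sum>j\<in>A. int (letter u j) - int (letter u (n - i + j)))"
    unfolding dval_def n_def by (simp add: sum.reindex)
  also have "\<dots> = (\<Sum>j\<in>{1..i}. if letter u j > letter u (n - i + j)
                        then int (letter u j) - int (letter u (n - i + j)) else 0)"
    unfolding A_def by (simp add: sum.inter_filter[symmetric])
  also have "\<dots> = (\<Sum>j\<in>{1..i}. int (max (letter u j) (letter u (n - i + j)))
                                  - int (letter u (n - i + j)))"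
    by (intro sum.cong) (auto simp: max_def)
  also have "\<dots> = (\<Sum>j<i. int (max (u ! j) (u ! (n - i + j))) - int (u ! (n - i + j)))"
  proof -
    have "{1..i} = Suc ` {..<i}"
      by (simp add: atLeast1_atMost_eq_remove0 lessThan_Suc_atMost[symmetric] image_Suc_lessThan)
    then show ?thesis by (simp add: sum.reindex letter_def)
  qed
  finally have "dval i u = (\<Sum>j<i. int (max (u ! j) (u ! (n - i + j))) - int (u ! (n - i + j)))" .
  moreover have "(\<Sum>(a, b)\<leftarrow>zip (take i u) (drop (n - i) u). int (max a b))
                  = (\<Sum>j<i. int (max (u ! j) (u ! (n - i + j))))"
    unfolding sum_list_sum_nth using assms n_def
    by (auto simp: lessThan_atLeast0 intro!: sum.cong)
  moreover have "int (sum_list (drop (n - i) u)) = (\<Sum>j<i. int (u ! (n - i + j)))"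
    unfolding sum_list_of_nat[symmetric] sum_list_sum_nth using assms n_def
    by (auto simp: lessThan_atLeast0 intro!: sum.cong)
  ultimately show ?thesis
    unfolding overlap_value_def n_def[symmetric] sum_subtractf by simp
qed

text \<open>When the prefix and the suffix are the whole word, the maxima are the letters
  themselves and the overlap value vanishes.\<close>

lemma overlap_value_length: "overlap_value (length u) u = 0"
proof -
  have "(\<Sum>(a, b)\<leftarrow>zip u u. int (max a b)) = int (sum_list u)"
    by (induction u) auto
  then show ?thesis unfolding overlap_value_def by simp
qed

text \<open>Removing a minimal first letter \<open>x\<close>: it is paired with a letter \<open>y \<ge> x\<close>, so
  its pair contributes \<open>y\<close>, which cancels against \<open>y\<close> in the suffix sum.\<close>

lemma overlap_value_Cons_min:
  assumes "\<forall>y\<in>set w. x \<le> y" "1 \<le> i" "i \<le> length w"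
  shows "overlap_value i (x # w) = overlap_value (i - 1) w"
proof -
  define m where "m = length w - (i - 1)"
  have m: "1 \<le> m" "m - 1 < length w" "length (x # w) - i = m" using assms m_def by auto
  have "drop m (x # w) = drop (m - 1) w"
    using m(1) by (cases m) auto
  also have "\<dots> = w ! (m - 1) # drop m w"
    using m(1,2) by (metis Cons_nth_drop_Suc Suc_diff_1 less_le_trans zero_less_one)
  finally have drop_m: "drop m (x # w) = w ! (m - 1) # drop m w" .
  have "take i (x # w) = x # take (i - 1) w" "drop i (x # w) = drop (i - 1) w"
    using assms(2) by (cases i; simp)+
  moreover have "max x (w ! (m - 1)) = w ! (m - 1)"
    using assms(1) m(2) by auto
  ultimately show ?thesis
    unfolding overlap_value_def m(3) m_def[symmetric] drop_m by simp
qed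

text \<open>Removing a minimal last letter \<open>x\<close>: symmetrically, its pair contributes the
  partner \<open>u\<^sub>i\<close>, which cancels against \<open>u\<^sub>i\<close> in \<open>\<Sigma>(u\<^sub>i \<dots> u\<^sub>n)\<close>.\<close>

lemma overlap_value_snoc_min:
  assumes "\<forall>y\<in>set w. x \<le> y" "1 \<le> i" "i \<le> length w"
  shows "overlap_value i (w @ [x]) = overlap_value (i - 1) w"
proof -
  define m where "m = length w - (i - 1)"
  have m: "m \<le> length w" "length (w @ [x]) - i = m" using assms m_def by auto
  have i: "i - 1 < length w" "Suc (i - 1) = i" using assms by auto
  have "take i (w @ [x]) = take i w" using assms(3) by simp
  also have "\<dots> = take (i - 1) w @ [w ! (i - 1)]"
    using i by (metis take_Suc_conv_app_nth)
  finally have take_i: "take i (w @ [x]) = take (i - 1) w @ [w ! (i - 1)]" .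
  have drop_i: "drop (i - 1) w = w ! (i - 1) # drop i w"
    using i by (metis Cons_nth_drop_Suc)
  have "max (w ! (i - 1)) x = w ! (i - 1)"
    using assms(1) nth_mem[OF i(1)] by (simp add: max_absorb1)
  moreover have "length (take (i - 1) w) = length (drop m w)" using assms m_def by simp
  ultimately show ?thesis
    using m(1) assms(3)
    unfolding overlap_value_def m(2) m_def[symmetric] take_i drop_i by simp
qed

text \<open>For a unimodal word the overlap value is the sum of its \<open>n - i\<close> largest letters:
  peel off a minimal end letter (which is the head of the sorted word) and induct on \<open>i\<close>.\<close>

lemma overlap_value_unimodal:
  assumes "unimodal u" "i \<le> length u"
  shows "overlap_value i u = int (sum_list (drop i (sort u)))"
  using assms
proof (induction i arbitrary: u)
  case 0
  then show ?case by (simp add: overlap_value_def flip: sum_mset_sum_list)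
next
  case (Suc i)
  show ?case
  proof (cases "Suc i = length u")
    case True
    then show ?thesis using overlap_value_length[of u] by simp
  next
    case False
    then have "u \<noteq> []" "Suc i < length u" using Suc.prems by auto
    then obtain x w where xw: "u = x # w \<or> u = w @ [x]" and x_min: "\<forall>y\<in>set w. x \<le> y"
      using unimodal_min_at_end Suc.prems(1) by blast
    have "unimodal w" using xw Suc.prems(1) unimodal_Cons unimodal_snoc by blast
    have len: "length u = Suc (length w)" using xw by auto
    have "mset u = mset (x # w)" using xw by auto
    then have "sort u = sort (x # w)" by (metis sorted_list_of_multiset_mset)
    also have "\<dots> = x # sort w" using x_min by (simp add: insort_is_Cons)
    finally have sort_u: "sort u = x # sort w" .
    have "overlap_value (Suc i) u = overlap_value i w"
      using xw overlap_value_Cons_min[OF x_min] overlap_value_snoc_min[OF x_min]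
        \<open>Suc i < length u\<close> len by auto
    also have "\<dots> = int (sum_list (drop i (sort w)))"
      using Suc.IH[OF \<open>unimodal w\<close>] \<open>Suc i < length u\<close> len by simp
    finally show ?thesis using sort_u by simp
  qed
qed

text \<open>Both sides equal the sum of the \<open>n - i\<close> largest letters, which depends only on the
  multiset of letters.\<close>

theorem lemma3:
  fixes u v :: "nat list"
  assumes "pos_word u" and "pos_word v"
    and "length u = n" and "length v = n"
    and "mset u = mset v"
    and "inc_dec_fact u" and "inc_dec_fact v"
  shows "\<forall>i. 1 \<le> i \<and> i \<le> n - 1 \<longrightarrow>
           dval i u + int (wsum (suffix_s i u)) = dval i v + int (wsum (suffix_s i v))"
proof (intro allI impI)
  fix i assume "1 \<le> i \<and> i \<le> n - 1"
  then have i_u: "i \<le> length u" and i_v: "i \<le> length v" using assms(3,4) by auto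
  have "dval i u + int (wsum (suffix_s i u)) = overlap_value i u"
    unfolding wsum_def suffix_s_def using i_u by (rule dval_plus_suffix_sum)
  also have "\<dots> = int (sum_list (drop i (sort u)))"
    using inc_dec_fact_unimodal[OF assms(6)] i_u by (rule overlap_value_unimodal)
  also have "sort u = sort v"
    using assms(5) by (metis sorted_list_of_multiset_mset)
  also have "int (sum_list (drop i (sort v))) = overlap_value i v"
    using inc_dec_fact_unimodal[OF assms(7)] i_v by (rule overlap_value_unimodal[symmetric])
  also have "\<dots> = dval i v + int (wsum (suffix_s i v))"
    unfolding wsum_def suffix_s_def using i_v by (rule dval_plus_suffix_sum[symmetric])
  finally show "dval i u + int (wsum (suffix_s i u)) = dval i v + int (wsum (suffix_s i v))" .
qed

end
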